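(* Let $a, b$ be real numbers with $1 < a \leq b$, and let $$A = \bigcup_{k=0}^{\infty} \big([b^k, a b^k) \cap \mathbb{N}\big).$$ Then $A$ is fractionally dense if and only if $b \leq a^2$. Moreover, $\underline{d}(A) = \frac{a-1}{b-1}$.
   Context: $\mathbb{N} = \{1,2,3,\ldots\}$. For $A \subseteq \mathbb{N}$, the quotient set is $R(A) = \{a/a' : a, a' \in A\}$, and $A$ is called fractionally dense if the closure of $R(A)$ in $\mathbb{R}$ equals $[0,\infty)$. For $A \subseteq \mathbb{N}$ and $x>0$ let $A(x) = A \cap [1,x]$; the lower asymptotic density of $A$ is $\underline{d}(A) = \liminf_{n\to\infty} |A(n)|/n$. *)

theory Defs
  imports "HOL-Analysis.Analysis" "HOL-Library.Liminf_Limsup"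
begin

text \<open>Subsets of the positive integers are modelled as sets of naturals not containing 0.\<close>

definition quotient_set :: "nat set \<Rightarrow> real set" where
  "quotient_set A = {real x / real y | x y. x \<in> A \<and> y \<in> A}"

definition fractionally_dense :: "nat set \<Rightarrow> bool" where
  "fractionally_dense A \<longleftrightarrow> closure (quotient_set A) = {0..}"

definition lower_density :: "nat set \<Rightarrow> ereal" where
  "lower_density A = liminf (\<lambda>n. ereal (real (card (A \<inter> {1..n})) / real n))"

end

theory Submission
  imports Defs "HOL-Real_Asymp.Real_Asymp"
begin

text \<open>
  The set is the union of the blocks \<open>[b^k, a b^k)\<close>. A quotient of two of its elements is
  below \<open>a\<close> when the denominator lies in the later (or same) block and above \<open>b/a\<close> otherwise,
  so for \<open>b > a^2\<close> the gap \<open>(a, b/a)\<close> stays empty. When \<open>b \<le> a^2\<close>, every \<open>t \<ge> 1\<close> has the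
  form \<open>\<alpha> b^p / \<beta>\<close> with \<open>\<alpha>, \<beta> \<in> [1, a]\<close>, which is the limit of quotients of elements
  \<open>\<approx> \<alpha> b^(p+j)\<close> and \<open>\<approx> \<beta> b^j\<close> of late blocks.

  Block \<open>k\<close> has \<open>(a - 1) b^k + O(1)\<close> elements. Just below \<open>b^K\<close> the count is therefore
  \<open>(a - 1)(b^K - 1)/(b - 1) + O(K)\<close>, while for every \<open>n\<close> the blocks fill at least the proportion
  \<open>(a - 1)/(b - 1)\<close> of each stretch \<open>[b^k, b^(k+1)) \<inter> [0, n]\<close>, up to one element per block,
  i.e. up to \<open>O(log n)\<close> in total.
\<close>

lemma card_real_interval:
  assumes "0 \<le> u" "u \<le> w"
  shows "real (card {m::nat. u \<le> real m \<and> real m < w}) = of_int \<lceil>w\<rceil> - of_int \<lceil>u\<rceil>"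
proof -
  have "0 \<le> \<lceil>u\<rceil>" "\<lceil>u\<rceil> \<le> \<lceil>w\<rceil>"
    using assms by (auto intro: ceiling_mono)
  then have "int (nat \<lceil>w\<rceil> - nat \<lceil>u\<rceil>) = \<lceil>w\<rceil> - \<lceil>u\<rceil>"
    by linarith
  then have "real (nat \<lceil>w\<rceil> - nat \<lceil>u\<rceil>) = of_int \<lceil>w\<rceil> - of_int \<lceil>u\<rceil>"
    by (metis of_int_diff of_int_of_nat_eq)
  moreover have "{m::nat. u \<le> real m \<and> real m < w} = {nat \<lceil>u\<rceil>..<nat \<lceil>w\<rceil>}"
    by (auto simp: ceiling_le_iff less_ceiling_iff le_nat_iff zless_nat_eq_int_zless)
  ultimately show ?thesis
    by simp
qed

lemma exists_power_le_less_Suc: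
  fixes b t :: real
  assumes "1 < b" "1 \<le> t"
  shows "\<exists>n. b ^ n \<le> t \<and> t < b ^ Suc n"
proof -
  define n where "n = nat \<lfloor>log b t\<rfloor>"
  have "0 \<le> log b t"
    using assms by simp
  then have "\<lfloor>log b t\<rfloor> = int n"
    unfolding n_def by simp
  then have "b powr real n \<le> t \<and> t < b powr (real n + 1)"
    using assms floor_log_eq_powr_iff[of t b "int n"] by auto
  moreover have "b powr (real n + 1) = b ^ Suc n"
    using assms by (simp add: powr_add powr_realpow)
  ultimately show ?thesis
    using assms by (auto simp: powr_realpow)
qed

lemma nat_ceiling_minus_one_bounds:
  fixes x :: real
  assumes "1 \<le> x"
  shows "x - 1 \<le> real (nat \<lceil>x\<rceil> - 1)" "real (nat \<lceil>x\<rceil> - 1) < x"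
proof -
  have "int (nat \<lceil>x\<rceil> - 1) = \<lceil>x\<rceil> - 1"
    using assms by linarith
  then have "real (nat \<lceil>x\<rceil> - 1) = of_int \<lceil>x\<rceil> - 1"
    by (metis of_int_diff of_int_of_nat_eq of_int_1)
  then show "x - 1 \<le> real (nat \<lceil>x\<rceil> - 1)" "real (nat \<lceil>x\<rceil> - 1) < x"
    using ceiling_correct[of x] by linarith+
qed

lemma sum_of_bool_power_le_le_log:
  fixes b x :: real
  assumes "1 < b" "1 \<le> x"
  shows "(\<Sum>k<M. of_bool (b ^ k \<le> x)) \<le> log b x + 1"
proof -
  have "{..<M} \<inter> {k. b ^ k \<le> x} \<subseteq> {..nat \<lfloor>log b x\<rfloor>}"
  proof
    fix k assume "k \<in> {..<M} \<inter> {k. b ^ k \<le> x}"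
    then have "real k \<le> log b x"
      using assms(1) by (auto intro: le_log_of_power)
    then have "int k \<le> \<lfloor>log b x\<rfloor>"
      by (simp add: le_floor_iff)
    then show "k \<in> {..nat \<lfloor>log b x\<rfloor>}"
      by simp
  qed
  then have "card ({..<M} \<inter> {k. b ^ k \<le> x}) \<le> nat \<lfloor>log b x\<rfloor> + 1"
    using card_mono[of "{..nat \<lfloor>log b x\<rfloor>}"] by fastforce
  moreover have "0 \<le> log b x"
    using assms by simp
  ultimately show ?thesis
    by simp linarith
qed

lemma exists_nat_near_in_interval:
  fixes B \<beta> c :: real
  assumes "0 \<le> B" "1 \<le> (c - 1) * B" "1 \<le> \<beta>" "\<beta> \<le> c"
  shows "\<exists>y::nat. B \<le> real y \<and> real y < c * B \<and> \<bar>real y - \<beta> * B\<bar> \<le> 1"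
proof -
  have "B \<le> \<beta> * B" "\<beta> * B \<le> c * B"
    using assms mult_right_mono[of 1 \<beta> B] mult_right_mono[of \<beta> c B] by auto
  show ?thesis
  proof (cases "B + 1 \<le> \<beta> * B")
    case True
    then have "1 \<le> \<lceil>\<beta> * B\<rceil>"
      using assms by linarith
    then have "real (nat (\<lceil>\<beta> * B\<rceil> - 1)) = of_int \<lceil>\<beta> * B\<rceil> - 1"
      by simp
    then show ?thesis
      using True \<open>\<beta> * B \<le> c * B\<close> ceiling_correct[of "\<beta> * B"] unfolding abs_le_iff
      by (intro exI[of _ "nat (\<lceil>\<beta> * B\<rceil> - 1)"] conjI; linarith)
  next
    case False
    have "B + 1 \<le> c * B"
      using assms by (simp add: algebra_simps)
    moreover have "real (nat \<lceil>B\<rceil>) = of_int \<lceil>B\<rceil>"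
      using assms by simp
    ultimately show ?thesis
      using False \<open>B \<le> \<beta> * B\<close> ceiling_correct[of B] unfolding abs_le_iff
      by (intro exI[of _ "nat \<lceil>B\<rceil>"] conjI; linarith)
  qed
qed

lemma tendsto_ratio_of_bounded_error:
  fixes x B :: "'a \<Rightarrow> real"
  assumes "filterlim B at_top F" "\<forall>\<^sub>F j in F. \<bar>x j - \<alpha> * B j\<bar> \<le> 1"
  shows "((\<lambda>j. x j / B j) \<longlongrightarrow> \<alpha>) F"
proof (rule LIM_zero_cancel, rule Lim_null_comparison)
  have "\<forall>\<^sub>F j in F. 0 < B j"
    using assms(1) by (simp add: filterlim_at_top_dense)
  then show "\<forall>\<^sub>F j in F. norm (x j / B j - \<alpha>) \<le> 1 / B j"
    using assms(2)
  proof eventually_elim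
    case (elim j)
    then have "x j / B j - \<alpha> = (x j - \<alpha> * B j) / B j"
      by (simp add: field_simps)
    then show ?case
      using elim by (simp add: abs_divide divide_right_mono)
  qed
  show "((\<lambda>j. 1 / B j) \<longlongrightarrow> 0) F"
    using tendsto_inverse_0_at_top[OF assms(1)] by (simp add: divide_inverse)
qed

lemma liminf_le_liminf_compose:
  fixes f :: "nat \<Rightarrow> 'a::complete_linorder"
  assumes "filterlim r sequentially sequentially"
  shows "liminf f \<le> liminf (\<lambda>n. f (r n))"
proof -
  have "liminf f \<le> Liminf (filtermap r sequentially) f"
    using assms unfolding filterlim_def
    by (auto simp: Liminf_def le_filter_def intro!: SUP_subset_mono)
  also have "\<dots> \<le> liminf (\<lambda>n. f (r n))"
    by (rule Liminf_filtermap_le)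
  finally show ?thesis .
qed

lemma ge_one_eq_scaled_power_ratio:
  fixes a b t :: real
  assumes "1 < b" "0 < a" "b \<le> a\<^sup>2" "1 \<le> t"
  shows "\<exists>\<alpha> \<beta> p. 1 \<le> \<alpha> \<and> \<alpha> \<le> a \<and> 1 \<le> \<beta> \<and> \<beta> \<le> a \<and> t = \<alpha> * b ^ p / \<beta>"
proof -
  obtain n where n: "b ^ n \<le> t" "t < b ^ Suc n"
    using exists_power_le_less_Suc[OF assms(1,4)] by blast
  define s where "s = t / b ^ n"
  have "0 < b ^ n"
    using assms(1) by simp
  then have s: "1 \<le> s" "s < b" "t = s * b ^ n"
    using n by (auto simp: s_def field_simps)
  show ?thesis
  proof (cases "s \<le> a")
    case True
    then show ?thesis
      using s by (intro exI[of _ s] exI[of _ 1] exI[of _ n]) auto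
  next
    case False
    have "b / s \<le> b / a"
      using False assms(1,2) by (intro divide_left_mono) auto
    also have "\<dots> \<le> a"
      using assms(2,3) by (simp add: field_simps power2_eq_square)
    finally have "b / s \<le> a" .
    moreover have "1 \<le> a"
      using assms mult_le_one[of a a] by (cases "a \<le> 1") (auto simp: power2_eq_square)
    moreover have "1 \<le> b / s"
      using s by simp
    moreover have "t = 1 * b ^ Suc n / (b / s)"
      using s by (simp add: field_simps)
    ultimately show ?thesis
      by blast
  qed
qed

definition block :: "real \<Rightarrow> real \<Rightarrow> nat \<Rightarrow> nat set" where
  "block a b k = {m. b ^ k \<le> real m \<and> real m < a * b ^ k}"

context
  fixes a b :: real
  assumes one_less_a: "1 < a" and a_le_b: "a \<le> b"
begin

lemma one_less_b: "1 < b"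
  using one_less_a a_le_b by linarith

lemma block_disjoint:
  assumes "j \<noteq> k"
  shows "block a b j \<inter> block a b k = {}"
proof -
  have *: "block a b j \<inter> block a b k = {}" if "j < k" for j k
  proof -
    have "a * b ^ j \<le> b * b ^ j"
      using a_le_b one_less_b by simp
    also have "\<dots> \<le> b ^ k"
      using one_less_b that power_increasing[of "Suc j" k b] by simp
    finally show ?thesis
      unfolding block_def by auto
  qed
  show ?thesis
    using assms *[of j k] *[of k j] by (cases "j < k") auto
qed

lemma finite_block: "finite (block a b k)"
proof (rule finite_subset)
  show "block a b k \<subseteq> {..<nat \<lceil>a * b ^ k\<rceil>}"
    by (auto simp: block_def less_ceiling_iff zless_nat_eq_int_zless)
qed simp

lemma card_block_le: "real (card (block a b k)) \<le> (a - 1) * b ^ k + 1"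
proof -
  have "0 \<le> b ^ k" "b ^ k \<le> a * b ^ k"
    using one_less_a one_less_b by simp_all
  then have "real (card (block a b k)) = of_int \<lceil>a * b ^ k\<rceil> - of_int \<lceil>b ^ k\<rceil>"
    unfolding block_def by (rule card_real_interval)
  then show ?thesis
    unfolding left_diff_distrib using ceiling_correct[of "a * b ^ k"] ceiling_correct[of "b ^ k"]
    by linarith
qed

lemma card_block_inter_atMost_ge:
  "(a - 1) / (b - 1) * (min (real n) (b ^ Suc k) - min (real n) (b ^ k)) - of_bool (b ^ k \<le> real n)
     \<le> real (card (block a b k \<inter> {..n}))"
proof (cases "b ^ k \<le> real n")
  case False
  moreover have "b ^ k \<le> b ^ Suc k"
    using one_less_b by simp
  ultimately have "real n \<le> b ^ Suc k"
    by linarith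
  then show ?thesis
    using False by (simp add: min_absorb1 del: power_Suc)
next
  case True
  define L where "L = (a - 1) / (b - 1)"
  have L: "0 \<le> L" "L \<le> 1" "L * (b - 1) = a - 1"
    using one_less_a a_le_b one_less_b by (auto simp: L_def field_simps)
  define w where "w = min (a * b ^ k) (real n + 1)"
  have "block a b k \<inter> {..n} = {m. b ^ k \<le> real m \<and> real m < w}"
    unfolding block_def w_def by auto
  moreover have "0 \<le> b ^ k" "b ^ k \<le> w"
    using True one_less_a one_less_b by (simp_all add: w_def)
  ultimately have "real (card (block a b k \<inter> {..n})) = of_int \<lceil>w\<rceil> - of_int \<lceil>b ^ k\<rceil>"
    by (simp add: card_real_interval)
  then have card: "w - b ^ k - 1 \<le> real (card (block a b k \<inter> {..n}))"
    using ceiling_correct[of w] ceiling_correct[of "b ^ k"] by linarith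
  have "L * (min (real n) (b ^ Suc k) - b ^ k) \<le> w - b ^ k"
  proof (cases "a * b ^ k \<le> real n + 1")
    case True
    have "L * (min (real n) (b ^ Suc k) - b ^ k) \<le> L * (b ^ Suc k - b ^ k)"
      using L(1) by (intro mult_left_mono) auto
    also have "\<dots> = L * (b - 1) * b ^ k"
      by (simp add: algebra_simps)
    also have "\<dots> = (a - 1) * b ^ k"
      using L(3) by simp
    also have "\<dots> = w - b ^ k"
      using True by (simp add: w_def algebra_simps)
    finally show ?thesis .
  next
    case False
    have "L * (min (real n) (b ^ Suc k) - b ^ k) \<le> L * (real n - b ^ k)"
      using L(1) by (intro mult_left_mono) auto
    also have "\<dots> \<le> real n - b ^ k"
      using L(2) \<open>b ^ k \<le> real n\<close> mult_right_mono[of L 1 "real n - b ^ k"] by simp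
    finally show ?thesis
      using False by (simp add: w_def)
  qed
  then show ?thesis
    using card True by (simp add: L_def)
qed

lemma card_blocks_atLeastAtMost_ge:
  assumes "1 \<le> n"
  shows "(a - 1) / (b - 1) * (real n - 1) - log b n - 1 \<le> real (card ((\<Union>k. block a b k) \<inter> {1..n}))"
proof -
  define L where "L = (a - 1) / (b - 1)"
  define \<phi> where "\<phi> k = min (real n) (b ^ k)" for k
  obtain M where M: "real n < b ^ M"
    using real_arch_pow[OF one_less_b] by blast
  have "(\<Union>k<M. block a b k \<inter> {..n}) \<subseteq> (\<Union>k. block a b k) \<inter> {1..n}"
  proof
    fix m assume "m \<in> (\<Union>k<M. block a b k \<inter> {..n})"
    then obtain k where "b ^ k \<le> real m" "m \<le> n" "m \<in> block a b k"
      by (auto simp: block_def)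
    moreover have "1 \<le> b ^ k"
      using one_less_b by simp
    ultimately show "m \<in> (\<Union>k. block a b k) \<inter> {1..n}"
      by auto
  qed
  then have "card (\<Union>k<M. block a b k \<inter> {..n}) \<le> card ((\<Union>k. block a b k) \<inter> {1..n})"
    by (intro card_mono) auto
  moreover have "card (\<Union>k<M. block a b k \<inter> {..n}) = (\<Sum>k<M. card (block a b k \<inter> {..n}))"
    using finite_block block_disjoint by (intro card_UN_disjoint) auto
  ultimately have "(\<Sum>k<M. real (card (block a b k \<inter> {..n}))) \<le> real (card ((\<Union>k. block a b k) \<inter> {1..n}))"
    by (metis of_nat_le_iff of_nat_sum)
  moreover have "(\<Sum>k<M. L * (\<phi> (Suc k) - \<phi> k) - of_bool (b ^ k \<le> real n))
      \<le> (\<Sum>k<M. real (card (block a b k \<inter> {..n})))"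
    by (intro sum_mono) (use card_block_inter_atMost_ge in \<open>simp add: L_def \<phi>_def\<close>)
  moreover have "(\<Sum>k<M. L * (\<phi> (Suc k) - \<phi> k) - of_bool (b ^ k \<le> real n))
      = L * (real n - 1) - (\<Sum>k<M. of_bool (b ^ k \<le> real n))"
  proof -
    have "(\<Sum>k<M. \<phi> (Suc k) - \<phi> k) = real n - 1"
      unfolding sum_lessThan_telescope using M assms by (simp add: \<phi>_def)
    then show ?thesis
      by (simp only: sum_subtractf sum_distrib_left[symmetric])
  qed
  moreover have "(\<Sum>k<M. of_bool (b ^ k \<le> real n)) \<le> log b n + 1"
    using one_less_b assms by (intro sum_of_bool_power_le_le_log) auto
  ultimately show ?thesis
    unfolding L_def by linarith
qed

lemma card_blocks_atLeastAtMost_le: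
  assumes "real n < b ^ K"
  shows "real (card ((\<Union>k. block a b k) \<inter> {1..n})) \<le> (a - 1) / (b - 1) * (b ^ K - 1) + K"
proof -
  have "(\<Union>k. block a b k) \<inter> {1..n} \<subseteq> (\<Union>k<K. block a b k)"
  proof
    fix m assume "m \<in> (\<Union>k. block a b k) \<inter> {1..n}"
    then obtain k where k: "m \<in> block a b k" "m \<le> n"
      by auto
    have "k < K"
    proof (rule ccontr)
      assume "\<not> k < K"
      then have "b ^ K \<le> b ^ k"
        using one_less_b by (intro power_increasing) auto
      then show False
        using k assms by (auto simp: block_def)
    qed
    then show "m \<in> (\<Union>k<K. block a b k)"
      using k by auto
  qed
  then have "card ((\<Union>k. block a b k) \<inter> {1..n}) \<le> card (\<Union>k<K. block a b k)"
    by (intro card_mono) (auto simp: finite_block)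
  also have "\<dots> \<le> (\<Sum>k<K. card (block a b k))"
    by (rule card_UN_le) simp
  finally have "real (card ((\<Union>k. block a b k) \<inter> {1..n})) \<le> (\<Sum>k<K. real (card (block a b k)))"
    by (metis of_nat_le_iff of_nat_sum)
  also have "\<dots> \<le> (\<Sum>k<K. (a - 1) * b ^ k + 1)"
    by (intro sum_mono card_block_le)
  also have "\<dots> = (a - 1) / (b - 1) * (b ^ K - 1) + K"
    using one_less_b by (simp add: sum.distrib sum_distrib_left[symmetric] geometric_sum)
  finally show ?thesis .
qed

lemma ereal_le_liminf_blocks_density:
  "ereal ((a - 1) / (b - 1)) \<le> liminf (\<lambda>n. ereal (real (card ((\<Union>k. block a b k) \<inter> {1..n})) / real n))"
proof -
  define L where "L = (a - 1) / (b - 1)"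
  define g where "g n = (L * (real n - 1) - log b n - 1) / real n" for n :: nat
  have "g \<longlonglongrightarrow> L"
    unfolding g_def using one_less_b by real_asymp
  then have "liminf (\<lambda>n. ereal (g n)) = ereal L"
    by (intro lim_imp_Liminf) auto
  moreover have "g n \<le> real (card ((\<Union>k. block a b k) \<inter> {1..n})) / real n" if "1 \<le> n" for n
    unfolding g_def L_def
    by (rule divide_right_mono[OF card_blocks_atLeastAtMost_ge[OF that]]) simp
  then have "liminf (\<lambda>n. ereal (g n))
      \<le> liminf (\<lambda>n. ereal (real (card ((\<Union>k. block a b k) \<inter> {1..n})) / real n))"
    by (intro Liminf_mono eventually_sequentiallyI[of 1]) simp
  ultimately show ?thesis
    by (simp add: L_def)
qed

lemma liminf_blocks_density_le:
  "liminf (\<lambda>n. ereal (real (card ((\<Union>k. block a b k) \<inter> {1..n})) / real n)) \<le> ereal ((a - 1) / (b - 1))"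
proof -
  define L where "L = (a - 1) / (b - 1)"
  define f where "f n = real (card ((\<Union>k. block a b k) \<inter> {1..n})) / real n" for n :: nat
  define r where "r K = nat \<lceil>b ^ K\<rceil> - 1" for K :: nat
  define h where "h K = (L * (b ^ K - 1) + K) / (b ^ K - 1)" for K :: nat
  have "filterlim r sequentially sequentially"
    unfolding r_def using one_less_b by real_asymp
  then have "liminf (\<lambda>n. ereal (f n)) \<le> liminf (\<lambda>K. ereal (f (r K)))"
    by (rule liminf_le_liminf_compose)
  also have "\<dots> \<le> liminf (\<lambda>K. ereal (h K))"
  proof (rule Liminf_mono)
    have "\<forall>\<^sub>F K in sequentially. 1 < b ^ K"
      using one_less_b by real_asymp
    then show "\<forall>\<^sub>F K in sequentially. ereal (f (r K)) \<le> ereal (h K)"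
    proof eventually_elim
      case (elim K)
      then have r: "b ^ K - 1 \<le> real (r K)" "real (r K) < b ^ K"
        using nat_ceiling_minus_one_bounds[of "b ^ K"] by (simp_all add: r_def)
      have "0 \<le> L"
        using one_less_a one_less_b by (simp add: L_def)
      have "f (r K) \<le> (L * (b ^ K - 1) + K) / real (r K)"
        unfolding f_def L_def using r elim
        by (intro divide_right_mono card_blocks_atLeastAtMost_le) auto
      also have "\<dots> \<le> h K"
        unfolding h_def using r elim \<open>0 \<le> L\<close> by (intro divide_left_mono) auto
      finally show ?case
        by simp
    qed
  qed
  also have "\<dots> = ereal L"
  proof (intro lim_imp_Liminf)
    have "h \<longlonglongrightarrow> L"
      unfolding h_def using one_less_b by real_asymp
    then show "(\<lambda>K. ereal (h K)) \<longlonglongrightarrow> ereal L"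
      by simp
  qed simp
  finally show ?thesis
    unfolding f_def L_def .
qed

lemma lower_density_blocks: "lower_density (\<Union>k. block a b k) = ereal ((a - 1) / (b - 1))"
  unfolding lower_density_def
  using ereal_le_liminf_blocks_density liminf_blocks_density_le by (rule antisym[rotated])

lemma quotient_of_blocks_outside_gap:
  assumes "x \<in> block a b k" "y \<in> block a b j"
  shows "real x / real y < a \<or> b / a < real x / real y"
proof -
  have x: "b ^ k \<le> real x" "real x < a * b ^ k" and y: "b ^ j \<le> real y" "real y < a * b ^ j"
    using assms by (auto simp: block_def)
  have "0 < b ^ j"
    using one_less_b by simp
  then have "0 < real y"
    using y(1) by linarith
  show ?thesis
  proof (cases "k \<le> j")
    case True
    then have "b ^ k \<le> b ^ j"
      using one_less_b by (intro power_increasing) auto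
    then have "b ^ k \<le> real y"
      using y(1) by linarith
    then have "a * b ^ k \<le> a * real y"
      using one_less_a by (intro mult_left_mono) auto
    then have "real x < a * real y"
      using x(2) by linarith
    then show ?thesis
      using \<open>0 < real y\<close> by (simp add: pos_divide_less_eq)
  next
    case False
    then have "b ^ Suc j \<le> b ^ k"
      using one_less_b by (intro power_increasing) auto
    then have "b * b ^ j \<le> real x"
      using x(1) by simp
    then have "a * (b * b ^ j) \<le> a * real x"
      using one_less_a by (intro mult_left_mono) auto
    moreover have "b * real y < b * (a * b ^ j)"
      using y(2) one_less_b by simp
    moreover have "b * (a * b ^ j) = a * (b * b ^ j)"
      by (rule mult.left_commute)
    ultimately have "b * real y < a * real x"
      by linarith
    then show ?thesis
      using \<open>0 < real y\<close> one_less_a by (simp add: pos_less_divide_eq pos_divide_less_eq mult.commute)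
  qed
qed

lemma scaled_power_ratio_in_closure:
  assumes "1 \<le> \<alpha>" "\<alpha> \<le> a" "1 \<le> \<beta>" "\<beta> \<le> a"
  shows "\<alpha> * b ^ p / (\<beta> * b ^ q) \<in> closure (quotient_set (\<Union>k. block a b k))"
proof -
  obtain J where J: "1 / (a - 1) < b ^ J"
    using real_arch_pow[OF one_less_b] by blast
  have near: "\<exists>m. m \<in> block a b k \<and> \<bar>real m - \<gamma> * b ^ k\<bar> \<le> 1"
    if "1 \<le> \<gamma>" "\<gamma> \<le> a" "J \<le> k" for \<gamma> k
  proof -
    have "1 \<le> (a - 1) * b ^ J"
      using J one_less_a by (simp add: field_simps)
    also have "\<dots> \<le> (a - 1) * b ^ k"
      using one_less_a one_less_b that(3) by (intro mult_left_mono power_increasing) auto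
    finally show ?thesis
      using exists_nat_near_in_interval[of "b ^ k" a \<gamma>] that one_less_b
      by (auto simp: block_def)
  qed
  have "\<forall>j. \<exists>m. m \<in> block a b (p + j + J) \<and> \<bar>real m - \<alpha> * b ^ (p + j + J)\<bar> \<le> 1"
    using near[OF assms(1,2)] by simp
  then obtain x where x: "\<And>j. x j \<in> block a b (p + j + J)" "\<And>j. \<bar>real (x j) - \<alpha> * b ^ (p + j + J)\<bar> \<le> 1"
    by metis
  have "\<forall>j. \<exists>m. m \<in> block a b (q + j + J) \<and> \<bar>real m - \<beta> * b ^ (q + j + J)\<bar> \<le> 1"
    using near[OF assms(3,4)] by simp
  then obtain y where y: "\<And>j. y j \<in> block a b (q + j + J)" "\<And>j. \<bar>real (y j) - \<beta> * b ^ (q + j + J)\<bar> \<le> 1"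
    by metis
  have "(\<lambda>j. real (x j) / b ^ (p + j + J)) \<longlonglongrightarrow> \<alpha>"
    using one_less_b by (intro tendsto_ratio_of_bounded_error always_eventually allI x(2)) real_asymp
  moreover have "(\<lambda>j. real (y j) / b ^ (q + j + J)) \<longlonglongrightarrow> \<beta>"
    using one_less_b by (intro tendsto_ratio_of_bounded_error always_eventually allI y(2)) real_asymp
  ultimately have "(\<lambda>j. real (x j) / b ^ (p + j + J) / (real (y j) / b ^ (q + j + J)) * (b ^ p / b ^ q))
      \<longlonglongrightarrow> \<alpha> / \<beta> * (b ^ p / b ^ q)"
    using assms by (intro tendsto_intros) auto
  moreover have "real (x j) / b ^ (p + j + J) / (real (y j) / b ^ (q + j + J)) * (b ^ p / b ^ q)
      = real (x j) / real (y j)" for j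
    using one_less_b by (simp add: power_add field_simps)
  moreover have "real (x j) / real (y j) \<in> quotient_set (\<Union>k. block a b k)" for j
    using x(1) y(1) unfolding quotient_set_def by blast
  ultimately show ?thesis
    unfolding closure_sequential by (intro exI[of _ "\<lambda>j. real (x j) / real (y j)"]) auto
qed

lemma le_square_if_fractionally_dense_blocks:
  assumes dense: "fractionally_dense (\<Union>k. block a b k)"
  shows "b \<le> a\<^sup>2"
proof (rule ccontr)
  assume "\<not> b \<le> a\<^sup>2"
  define c where "c = b / a"
  have "a < c"
    using \<open>\<not> b \<le> a\<^sup>2\<close> one_less_a by (simp add: c_def pos_less_divide_eq power2_eq_square)
  have "quotient_set (\<Union>k. block a b k) \<subseteq> {..a} \<union> {c..}"
  proof
    fix q assume "q \<in> quotient_set (\<Union>k. block a b k)"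
    then obtain x y k j where "q = real x / real y" "x \<in> block a b k" "y \<in> block a b j"
      unfolding quotient_set_def by blast
    then show "q \<in> {..a} \<union> {c..}"
      using quotient_of_blocks_outside_gap[of x k y j] by (auto simp: c_def)
  qed
  then have "closure (quotient_set (\<Union>k. block a b k)) \<subseteq> {..a} \<union> {c..}"
    by (rule closure_minimal) (intro closed_Un closed_atMost closed_atLeast)
  moreover have "(a + c) / 2 \<in> {0..} - ({..a} \<union> {c..})"
    using \<open>a < c\<close> one_less_a by auto
  ultimately show False
    using dense unfolding fractionally_dense_def by blast
qed

lemma fractionally_dense_blocks_if_le_square:
  assumes "b \<le> a\<^sup>2"
  shows "fractionally_dense (\<Union>k. block a b k)"
proof -
  let ?C = "closure (quotient_set (\<Union>k. block a b k))"
  have ge_one: "t \<in> ?C \<and> 1 / t \<in> ?C" if "1 \<le> t" for t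
  proof -
    obtain \<alpha> \<beta> p where \<alpha>\<beta>: "1 \<le> \<alpha>" "\<alpha> \<le> a" "1 \<le> \<beta>" "\<beta> \<le> a" and t: "t = \<alpha> * b ^ p / \<beta>"
      using ge_one_eq_scaled_power_ratio[of b a t] one_less_b one_less_a \<open>b \<le> a\<^sup>2\<close> \<open>1 \<le> t\<close>
      by auto
    have "\<alpha> * b ^ p / (\<beta> * b ^ 0) \<in> ?C" "\<beta> * b ^ 0 / (\<alpha> * b ^ p) \<in> ?C"
      using \<alpha>\<beta> by (simp_all only: scaled_power_ratio_in_closure)
    then show ?thesis
      unfolding t by simp
  qed
  have "{0<..} \<subseteq> ?C"
  proof
    fix t :: real assume "t \<in> {0<..}"
    then have "1 \<le> t \<or> 1 \<le> 1 / t"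
      by (auto simp: le_divide_eq_1_pos)
    then show "t \<in> ?C"
      using ge_one[of t] ge_one[of "1 / t"] by auto
  qed
  then have "{0..} \<subseteq> ?C"
    using closure_minimal[of "{0<..}" ?C] by simp
  moreover have "?C \<subseteq> {0..}"
    by (rule closure_minimal) (auto simp: quotient_set_def)
  ultimately show ?thesis
    unfolding fractionally_dense_def by blast
qed

end

theorem proposition1:
  fixes a b :: real and A :: "nat set"
  assumes "1 < a" and "a \<le> b"
    and "A = {n. 1 \<le> n \<and> (\<exists>k::nat. b ^ k \<le> real n \<and> real n < a * b ^ k)}"
  shows "(fractionally_dense A \<longleftrightarrow> b \<le> a\<^sup>2) \<and> lower_density A = ereal ((a - 1) / (b - 1))"
proof -
  have "1 \<le> n" if "b ^ k \<le> real n" for k n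
  proof -
    have "1 \<le> b ^ k"
      using assms(1,2) by simp
    then show ?thesis
      using that by linarith
  qed
  then have "A = (\<Union>k. block a b k)"
    unfolding assms(3) block_def by blast
  then show ?thesis
    using le_square_if_fractionally_dense_blocks[OF assms(1,2)] fractionally_dense_blocks_if_le_square[OF assms(1,2)]
      lower_density_blocks[OF assms(1,2)]
    by blast
qed

end
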